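(* Let $\lambda,\mu\ge 0$ be real, $w$ a positive integer, and $$D_w(p)=(1-\lambda^2p^2)(1-\mu^2p^2)-(\lambda^2-p^2)(\mu^2-p^2)p^{2w}.$$ Zeros of $D_w$ of the form $p=e^{it}$ with $t$ real arise from solutions $t\in[0,2\pi)$ of $$\tan wt=\frac{\left(\frac{\lambda^2-1}{\lambda^2+1}+\frac{\mu^2-1}{\mu^2+1}\right)\tan t}{\left(\frac{\lambda^2-1}{\lambda^2+1}\right)\left(\frac{\mu^2-1}{\mu^2+1}\right)-\tan^2 t}.\qquad(\ast)$$ Additionally, if $\lambda=1$ or $\mu=1$ then $D_w(\pm1)=0$, and if $\lambda=\mu=1$ then $p=\pm1$ are triple zeros of $D_w$. Moreover, for $w$ sufficiently large, the numbers of solutions of $(\ast)$ in $[0,2\pi)$ and the numbers of zeros of $D_w$ (counted with multiplicity) are as follows: (1) if $\lambda<1$ and $\mu<1$: $(\ast)$ has $2w+4$ solutions and $D_w$ has $2w+4$ zeros on the unit circle; (2) if $\lambda<1,\mu=1$, or $\lambda=1,\mu<1$: $(\ast)$ has $2w+2$ solutions and $D_w$ has $2w+4$ zeros on the unit circle; (3) if $\lambda=\mu=1$: $(\ast)$ has $2w$ solutions and $D_w$ has $2w+4$ zeros on the unit circle; (4) if $\lambda>1,\mu<1$, or $\lambda<1,\mu>1$: $(\ast)$ has $2w$ solutions, and $D_w$ has $2w$ zeros on the unit circle and $4$ zeros on the real line; (5) if $\lambda>1,\mu=1$, or $\lambda=1,\mu>1$: $(\ast)$ has $2w-2$ solutions,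 and $D_w$ has $2w$ zeros on the unit circle and $4$ zeros on the real line; (6) if $\lambda>1$ and $\mu>1$: $(\ast)$ has $2w-4$ solutions, and $D_w$ has $2w-4$ zeros on the unit circle and $8$ zeros on the real line. Thus $D_w$ has $(2w+4)-4\sigma$ zeros on the unit circle for some $\sigma\in\{0,1,2\}$ depending on $\lambda,\mu$, and its other $4\sigma$ zeros lie on the real line; if $p$ is a real zero then so are $-p$, $1/p$ and $-1/p$.
   Context: $D_w(p)$ is the denominator polynomial of the generating function of loops (directed paths with steps $(1,\pm1)$ starting and ending on $y=0$, confined to $0\le y\le w$), with bottom-wall weight $a=1+\lambda^2$ and top-wall weight $b=1+\mu^2$. *)

theory Defs
  imports "HOL-Analysis.Analysis" "HOL-Computational_Algebra.Polynomial"
begin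

definition Dw :: "real \<Rightarrow> real \<Rightarrow> nat \<Rightarrow> complex poly" where
  "Dw lam mu w =
     [:1, 0, - complex_of_real (lam^2):] * [:1, 0, - complex_of_real (mu^2):]
     - [:complex_of_real (lam^2), 0, -1:] * [:complex_of_real (mu^2), 0, -1:] * monom 1 (2*w)"

definition cst :: "real \<Rightarrow> real" where
  "cst lam = (lam^2 - 1) / (lam^2 + 1)"

text \<open>t solves (*):  tan(w t) = (a+b) tan t / (a b - tan^2 t), a = cst lam, b = cst mu.
  Both sides are read as values in the projective line R \<union> {\<infinity>}, i.e.
  tan x = [sin x : cos x], and the right-hand side is the rational function of tan t
  in lowest terms, written homogeneously in (sin t, cos t):
  - if a+b = 0 the rational function is identically 0, so (*) reads tan(wt) = 0;
  - if a+b \<noteq> 0 and a b = 0 the common factor tan t cancels, leaving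
    tan(wt) = -(a+b)/tan t;
  - otherwise numerator (a+b) s c and denominator a b c^2 - s^2 are coprime.
  Equality of projective points [x0:x1] = [y0:y1] is x0 y1 = x1 y0.\<close>
definition star_sol :: "real \<Rightarrow> real \<Rightarrow> nat \<Rightarrow> real \<Rightarrow> bool" where
  "star_sol lam mu w t =
     (let a = cst lam; b = cst mu; s = sin t; c = cos t;
          sw = sin (real w * t); cw = cos (real w * t) in
      if a + b = 0 then sw = 0
      else if a * b = 0 then sw * (- s) = cw * ((a + b) * c)
      else sw * (a * b * c^2 - s^2) = cw * ((a + b) * s * c))"

definition nsol :: "real \<Rightarrow> real \<Rightarrow> nat \<Rightarrow> nat" where
  "nsol lam mu w = card {t. 0 \<le> t \<and> t < 2 * pi \<and> star_sol lam mu w t}"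

definition circle_zeros :: "complex poly \<Rightarrow> nat" where
  "circle_zeros P = (\<Sum>z \<in> {z. poly P z = 0 \<and> cmod z = 1}. order z P)"

definition real_zeros :: "complex poly \<Rightarrow> nat" where
  "real_zeros P = (\<Sum>z \<in> {z. poly P z = 0 \<and> Im z = 0 \<and> cmod z \<noteq> 1}. order z P)"

end

theory Submission
  imports Defs
begin

text \<open>On the unit circle \<open>p = cis t\<close> the factor \<open>1 - \<lambda>\<^sup>2 p\<^sup>2\<close> of \<open>D\<^sub>w\<close> is, up to a unimodular factor
  and the constant \<open>\<lambda>\<^sup>2 + 1\<close>, the vector \<open>a cos t + i sin t\<close> with \<open>a = (\<lambda>\<^sup>2 - 1)/(\<lambda>\<^sup>2 + 1)\<close>, and
  \<open>\<lambda>\<^sup>2 - p\<^sup>2\<close> is its conjugate. Hence \<open>D\<^sub>w(cis t) = 0\<close> iff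
  \<open>Im (cis (-w t) (a cos t + i sin t) (b cos t + i sin t)) = 0\<close>, which is (*) up to the cancellation
  of a common factor \<open>sin t\<close> when \<open>\<lambda> = 1\<close> or \<open>\<mu> = 1\<close>. With continuous arguments \<open>\<phi>\<^sub>a, \<phi>\<^sub>b\<close> of the
  two vectors, (*) reads \<open>sin (w t - \<phi>\<^sub>a t - \<phi>\<^sub>b t) = 0\<close>. Since \<open>\<phi>\<^sub>a\<close> has bounded derivative and winds
  by \<open>2\<pi> sgn a\<close> over \<open>[0, 2\<pi>]\<close>, for large \<open>w\<close> the phase is increasing and (*) has exactly
  \<open>2w - 2 sgn a - 2 sgn b\<close> solutions, each giving a zero on the unit circle; \<open>\<plusminus>1\<close> are further zeros
  when exactly one of \<open>\<lambda>, \<mu>\<close> is 1 and triple zeros when both are. For each of \<open>\<lambda>, \<mu>\<close> exceeding 1,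
  the intermediate value theorem yields for large \<open>w\<close> a zero \<open>r \<in> (0, 1)\<close>, hence the four real
  zeros \<open>\<plusminus>r, \<plusminus>1/r\<close>. These lower bounds add up to the degree \<open>2w + 4\<close>, so all of them are exact.\<close>

lemma poly_Dw:
  "poly (Dw lam mu w) z =
     (1 - of_real (lam^2) * z^2) * (1 - of_real (mu^2) * z^2)
     - (of_real (lam^2) - z^2) * (of_real (mu^2) - z^2) * z^(2*w)"
  by (simp add: Dw_def poly_monom algebra_simps power2_eq_square)

lemma Dw_swap: "Dw lam mu w = Dw mu lam w"
  unfolding Dw_def by (simp add: mult.commute mult.left_commute)

lemma poly_Dw_zero: "1 \<le> w \<Longrightarrow> poly (Dw lam mu w) 0 = 1"
  by (simp add: poly_Dw zero_power)

lemma Dw_nonzero: "1 \<le> w \<Longrightarrow> Dw lam mu w \<noteq> 0"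
  by (metis poly_0 poly_Dw_zero zero_neq_one)

lemma degree_Dw_le: "degree (Dw lam mu w) \<le> 2*w + 4"
proof -
  have "degree ([:1, 0, - complex_of_real (lam^2):] * [:1, 0, - complex_of_real (mu^2):]) \<le> 2*w + 4"
    by (rule order.trans[OF degree_mult_le]) simp
  moreover have "degree ([:complex_of_real (lam^2), 0, -1:] * [:complex_of_real (mu^2), 0, -1:]
                   * monom (1::complex) (2*w)) \<le> 2*w + 4"
    by (rule order.trans[OF degree_mult_le])
      (rule order.trans[OF add_mono[OF degree_mult_le degree_monom_le]], simp)
  ultimately show ?thesis
    unfolding Dw_def by (intro order.trans[OF degree_diff_le_max]) simp
qed

lemma poly_Dw_minus: "poly (Dw lam mu w) (-z) = poly (Dw lam mu w) z"
  by (simp add: poly_Dw power_mult)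

lemma poly_Dw_inverse:
  assumes "z \<noteq> 0"
  shows "poly (Dw lam mu w) (1/z) = - ((1/z)^(2*w + 4) * poly (Dw lam mu w) z)"
proof -
  define y where "y = 1/z"
  define P where "P = z^(2*w)"
  define Q where "Q = y^(2*w)"
  have yz: "y * z = 1" using assms by (simp add: y_def)
  have PQ: "P * Q = 1" unfolding P_def Q_def by (metis power_mult_distrib yz mult.commute power_one)
  have "(1 - of_real (lam^2) * y^2) * (1 - of_real (mu^2) * y^2) - (of_real (lam^2) - y^2) * (of_real (mu^2) - y^2) * Q
     = - ((Q * y^4) * ((1 - of_real (lam^2) * z^2) * (1 - of_real (mu^2) * z^2)
                       - (of_real (lam^2) - z^2) * (of_real (mu^2) - z^2) * P))"
    using yz PQ by algebra
  then show ?thesis unfolding poly_Dw P_def Q_def y_def by (simp add: power_add)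
qed

lemma poly_Dw_one: "poly (Dw lam mu w) 1 = 0"
  by (simp add: poly_Dw algebra_simps)

lemma poly_Dw_minus_one: "poly (Dw lam mu w) (-1) = 0"
  using poly_Dw_minus[of lam mu w 1] poly_Dw_one by simp

lemma poly_Dw_real_root_reflections:
  assumes "1 \<le> w" "poly (Dw lam mu w) (of_real p) = 0"
  shows "poly (Dw lam mu w) (of_real (-p)) = 0"
    and "poly (Dw lam mu w) (of_real (1/p)) = 0"
    and "poly (Dw lam mu w) (of_real (-1/p)) = 0"
proof -
  have "p \<noteq> 0" using assms poly_Dw_zero by force
  then show inv: "poly (Dw lam mu w) (of_real (1/p)) = 0"
    using poly_Dw_inverse[of "of_real p" lam mu w] assms(2) by simp
  show "poly (Dw lam mu w) (of_real (-p)) = 0"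
    using assms(2) poly_Dw_minus[of lam mu w "of_real p"] by simp
  show "poly (Dw lam mu w) (of_real (-1/p)) = 0"
    using inv poly_Dw_minus[of lam mu w "of_real (1/p)"] by simp
qed

section \<open>Zeros on the unit circle\<close>

lemma square_plus_one_pos: "0 < (x::real)^2 + 1"
  by (simp add: add_nonneg_pos)

lemma cst_eq_0_iff: "0 \<le> lam \<Longrightarrow> cst lam = 0 \<longleftrightarrow> lam = 1"
  using square_plus_one_pos[of lam] unfolding cst_def by (simp add: power2_eq_1_iff)

lemma cst_complement: "(lam^2 + 1) * (1 - cst lam) = 2"
  using square_plus_one_pos[of lam] unfolding cst_def by (simp add: field_simps)

lemma abs_cst_le_1: "\<bar>cst lam\<bar> \<le> 1"
  using square_plus_one_pos[of lam] unfolding cst_def by (simp add: abs_le_iff)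

lemma sgn_cst: "0 \<le> lam \<Longrightarrow> sgn (cst lam) = of_bool (1 < lam) - of_bool (lam < 1)"
proof -
  assume "0 \<le> lam"
  then have "sgn (lam * lam - 1) = of_bool (1 < lam) - of_bool (lam < 1)"
  proof (cases lam "1::real" rule: linorder_cases)
    case less
    with \<open>0 \<le> lam\<close> have "lam * lam \<le> lam" by (simp add: mult_left_le_one_le)
    with less show ?thesis by simp
  next
    case greater
    then show ?thesis by (simp add: less_1_mult)
  qed simp
  then show ?thesis
    using square_plus_one_pos[of lam] unfolding cst_def by (simp add: sgn_divide power2_eq_square)
qed

text \<open>For \<open>p = cis t\<close>: \<open>1 - \<lambda>\<^sup>2 p\<^sup>2 = - p ((\<lambda>\<^sup>2 - 1) cos t + i (\<lambda>\<^sup>2 + 1) sin t)\<close> and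
  \<open>\<lambda>\<^sup>2 - p\<^sup>2 = p ((\<lambda>\<^sup>2 - 1) cos t - i (\<lambda>\<^sup>2 + 1) sin t)\<close>.\<close>

lemma poly_Dw_cis:
  fixes lam mu t :: real and w :: nat
  defines "a \<equiv> cst lam" and "b \<equiv> cst mu" and "c \<equiv> cos t" and "s \<equiv> sin t"
    and "C \<equiv> cos (w * t)" and "S \<equiv> sin (w * t)"
  shows "poly (Dw lam mu w) (cis t) = 2 * \<i> * (cis t)^2 * cis (w * t) *
      of_real ((lam^2 + 1) * (mu^2 + 1) * (C * ((a + b) * s * c) - S * (a * b * c^2 - s^2)))"
proof -
  define L where "L = lam^2 + 1"
  define M where "M = mu^2 + 1"
  have lam2: "lam^2 = L - 1" and mu2: "mu^2 = M - 1" by (simp_all add: L_def M_def)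
  have La: "L * (1 - a) = 2" and Mb: "M * (1 - b) = 2"
    using cst_complement[of lam] cst_complement[of mu] by (simp_all add: a_def b_def L_def M_def)
  have cs: "c^2 + s^2 = 1" by (simp add: c_def s_def)
  have ct: "cis t = of_real c + \<i> * of_real s" by (simp add: complex_eq_iff c_def s_def)
  have cw: "cis (w * t) = of_real C + \<i> * of_real S" by (simp add: complex_eq_iff C_def S_def)
  have "(cis t)^(2*w) = (cis t ^ w)^2" by (simp add: power_mult[symmetric] mult.commute)
  then have cis_w: "(cis t)^(2*w) = (of_real C + \<i> * of_real S)^2" by (simp only: Complex.DeMoivre cw)
  have "poly (Dw lam mu w) (cis t) =
      (1 - of_real (L - 1) * (of_real c + \<i> * of_real s)^2)
    * (1 - of_real (M - 1) * (of_real c + \<i> * of_real s)^2)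
    - (of_real (L - 1) - (of_real c + \<i> * of_real s)^2)
    * (of_real (M - 1) - (of_real c + \<i> * of_real s)^2) * (of_real C + \<i> * of_real S)^2"
    unfolding poly_Dw cis_w lam2 mu2 by (simp only: ct)
  also have "\<dots> = 2 * \<i> * (of_real c + \<i> * of_real s)^2 * (of_real C + \<i> * of_real S) *
      of_real (L * M * (C * ((a + b) * s * c) - S * (a * b * c^2 - s^2)))"
  proof -
    have "(of_real c :: complex)^2 + (of_real s)^2 = 1" by (metis cs of_real_add of_real_power of_real_1)
    moreover have "(of_real C :: complex)^2 + (of_real S)^2 = 1"
      by (metis sin_cos_squared_add3 of_real_add of_real_mult of_real_1 power2_eq_square C_def S_def)
    moreover have "(of_real L :: complex) * (1 - of_real a) = 2" "(of_real M :: complex) * (1 - of_real b) = 2"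
      using La Mb by (metis of_real_1 of_real_diff of_real_mult of_real_numeral)+
    moreover have "\<i> * \<i> = (-1 :: complex)" by simp
    ultimately show ?thesis
      unfolding of_real_mult of_real_diff of_real_add of_real_power of_real_1 by algebra
  qed
  finally show ?thesis unfolding ct cw L_def M_def .
qed

lemma poly_Dw_cis_eq_0_iff:
  "poly (Dw lam mu w) (cis t) = 0 \<longleftrightarrow>
     Im (cis (- (w * t)) * Complex (cst lam * cos t) (sin t) * Complex (cst mu * cos t) (sin t)) = 0"
proof -
  have "Im (cis (- (w * t)) * Complex (cst lam * cos t) (sin t) * Complex (cst mu * cos t) (sin t))
      = cos (w * t) * ((cst lam + cst mu) * sin t * cos t)
        - sin (w * t) * (cst lam * cst mu * (cos t)^2 - (sin t)^2)"
    by (simp add: algebra_simps power2_eq_square)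
  then show ?thesis
    unfolding poly_Dw_cis
    by (simp only: mult_eq_0_iff of_real_eq_0_iff)
      (use square_plus_one_pos[of lam] square_plus_one_pos[of mu] in auto)
qed

section \<open>A continuous argument of \<open>a cos t + i sin t\<close>\<close>

text \<open>For \<open>0 < a\<close> the arctan term is the argument of
  \<open>(a cos t + i sin t) (cos t - i sin t)\<close>, whose real part \<open>a cos\<^sup>2 t + sin\<^sup>2 t\<close> is positive;
  so \<open>arg_lift a\<close> is a continuous argument of \<open>a cos t + i sin t\<close>.\<close>

definition arg_lift :: "real \<Rightarrow> real \<Rightarrow> real" where
  "arg_lift a t = t + arctan ((1 - a) * sin t * cos t / (a * (cos t)^2 + (sin t)^2))"

lemma cos_sin_weighted_pos:
  fixes a t :: real
  assumes "0 < a"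
  shows "0 < a * (cos t)^2 + (sin t)^2"
proof (cases "sin t = 0")
  case True
  then have "(cos t)^2 = 1" using sin_cos_squared_add[of t] by simp
  then show ?thesis using True assms by simp
next
  case False
  then show ?thesis using assms by (simp add: add_nonneg_pos)
qed

lemma arg_lift_polar:
  assumes "0 < a"
  shows "\<exists>\<rho>>0. Complex (a * cos t) (sin t) = of_real \<rho> * cis (arg_lift a t)"
proof -
  define D where "D = a * (cos t)^2 + (sin t)^2"
  define q where "q = (1 - a) * sin t * cos t / D"
  define r where "r = sqrt (1 + q^2)"
  have D0: "D > 0" unfolding D_def by (rule cos_sin_weighted_pos[OF assms])
  have r0: "r > 0" unfolding r_def by (simp add: add_pos_nonneg)
  have "cis (arctan q) = of_real (1/r) * Complex 1 q"
    by (simp add: complex_eq_iff cos_arctan sin_arctan r_def)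
  moreover have "cis (arg_lift a t) = cis t * cis (arctan q)"
    unfolding arg_lift_def q_def D_def by (simp add: cis_mult)
  ultimately have "of_real (D * r) * cis (arg_lift a t) = of_real D * (Complex (cos t) (sin t) * Complex 1 q)"
    using r0 by (simp add: cis.ctr field_simps)
  also have "\<dots> = Complex (a * cos t) (sin t)"
  proof -
    have "q * D = (1 - a) * sin t * cos t" using D0 unfolding q_def by simp
    moreover have "(cos t)^2 + (sin t)^2 = 1" by simp
    ultimately have "D * cos t - sin t * (q * D) = a * cos t" "D * sin t + cos t * (q * D) = sin t"
      unfolding D_def by algebra+
    then show ?thesis by (simp add: complex_eq_iff algebra_simps)
  qed
  finally show ?thesis using D0 r0 by (intro exI[of _ "D * r"]) auto
qed

lemma arg_lift_has_derivative:
  assumes "0 < a"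
  shows "(arg_lift a has_real_derivative a / (a^2 * (cos t)^2 + (sin t)^2)) (at t)"
proof -
  define c where "c = cos t" define s where "s = sin t"
  define D where "D = a * c^2 + s^2"
  define E where "E = a^2 * c^2 + s^2"
  define q where "q = (1 - a) * s * c / D"
  define q' where "q' = ((1 - a) * (c^2 - s^2) * D - (1 - a) * s * c * (2 * (1 - a) * s * c)) / (D * D)"
  have cs: "c^2 + s^2 = 1" by (simp add: c_def s_def)
  have D0: "D > 0" unfolding D_def c_def s_def by (rule cos_sin_weighted_pos[OF assms])
  have E0: "E > 0" unfolding E_def c_def s_def by (rule cos_sin_weighted_pos) (use assms in simp)
  have dD: "((\<lambda>t. a * (cos t)^2 + (sin t)^2) has_real_derivative 2 * (1 - a) * s * c) (at t)"
    unfolding s_def c_def by (auto intro!: derivative_eq_intros simp: algebra_simps power2_eq_square)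
  have dN: "((\<lambda>t. (1 - a) * sin t * cos t) has_real_derivative (1 - a) * (c^2 - s^2)) (at t)"
    unfolding s_def c_def by (auto intro!: derivative_eq_intros simp: algebra_simps power2_eq_square)
  have dq: "((\<lambda>t. (1 - a) * sin t * cos t / (a * (cos t)^2 + (sin t)^2)) has_real_derivative q') (at t)"
    using DERIV_divide[OF dN dD] D0 unfolding q'_def D_def s_def c_def by simp
  have "(arg_lift a has_real_derivative 1 + inverse (1 + q^2) * q') (at t)"
    using DERIV_add[OF DERIV_ident DERIV_chain2[OF DERIV_arctan dq]]
    unfolding arg_lift_def[abs_def] q_def D_def s_def c_def by simp
  moreover have "1 + inverse (1 + q^2) * q' = a / E"
  proof -
    have "D * D * (1 + q^2) = D * D + ((1 - a) * s * c)^2"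
      using D0 unfolding q_def by (simp add: field_simps power2_eq_square)
    also have "\<dots> = E" unfolding D_def E_def using cs by algebra
    finally have "1 + inverse (1 + q^2) * q'
        = (E + (1 - a) * (c^2 - s^2) * D - (1 - a) * s * c * (2 * (1 - a) * s * c)) / E"
      using D0 E0 unfolding q'_def by (simp add: field_simps)
    also have "E + (1 - a) * (c^2 - s^2) * D - (1 - a) * s * c * (2 * (1 - a) * s * c) = a"
      unfolding E_def D_def using cs by algebra
    finally show ?thesis .
  qed
  ultimately show ?thesis unfolding E_def c_def s_def by simp
qed

text \<open>At \<open>a = 0\<close> the vector \<open>a cos t + i sin t = i sin t\<close> is replaced by \<open>i\<close>: this is the
  cancellation of the common factor \<open>tan t\<close> in the definition of \<^const>\<open>star_sol\<close>.\<close>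

definition phase_vector :: "real \<Rightarrow> real \<Rightarrow> complex" where
  "phase_vector a t = (if a = 0 then \<i> else Complex (a * cos t) (sin t))"

definition phase :: "real \<Rightarrow> real \<Rightarrow> real" where
  "phase a t = (if a = 0 then pi / 2 else if 0 < a then arg_lift a t else pi - arg_lift (- a) t)"

lemma phase_polar: "\<exists>\<rho>>0. phase_vector a t = of_real \<rho> * cis (phase a t)"
proof (cases a "0::real" rule: linorder_cases)
  case less
  then obtain \<rho> where "\<rho> > 0" "Complex (- a * cos t) (sin t) = of_real \<rho> * cis (arg_lift (- a) t)"
    using arg_lift_polar[of "- a" t] by auto
  moreover have "Complex (a * cos t) (sin t) = - cnj (Complex (- a * cos t) (sin t))"
    by (simp add: complex_eq_iff)
  ultimately show ?thesis
    using less by (auto simp: phase_vector_def phase_def complex_eq_iff)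
next
  case equal
  then show ?thesis by (auto simp: phase_vector_def phase_def complex_eq_iff)
next
  case greater
  then show ?thesis using arg_lift_polar[of a t] by (simp add: phase_vector_def phase_def)
qed

lemma phase_has_derivative: "(phase a has_real_derivative a / (a^2 * (cos t)^2 + (sin t)^2)) (at t)"
proof (cases a "0::real" rule: linorder_cases)
  case less
  then have "phase a = (\<lambda>t. pi - arg_lift (- a) t)" by (auto simp: phase_def)
  then show ?thesis
    using DERIV_diff[OF DERIV_const arg_lift_has_derivative[of "- a" t]] less by simp
next
  case equal
  then have "phase a = (\<lambda>t. pi / 2)" by (auto simp: phase_def)
  then show ?thesis using equal by simp
next
  case greater
  then have "phase a = arg_lift a" by (auto simp: phase_def)
  then show ?thesis using arg_lift_has_derivative[OF greater] by simp
qed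

text \<open>At \<open>a = 0\<close> both sides are \<open>0\<close> (with \<open>1 / 0 = 0\<close>).\<close>

lemma phase_derivative_bound:
  fixes a t :: real
  assumes "\<bar>a\<bar> \<le> 1"
  shows "\<bar>a / (a^2 * (cos t)^2 + (sin t)^2)\<bar> \<le> 1 / \<bar>a\<bar>"
proof (cases "a = 0")
  case False
  define E where "E = a^2 * (cos t)^2 + (sin t)^2"
  have "a^2 \<le> 1" using assms by (metis abs_square_le_1)
  then have "a^2 * (sin t)^2 \<le> (sin t)^2" by (simp add: mult_left_le_one_le)
  then have "a^2 \<le> E" by (simp add: E_def sin_squared_eq algebra_simps)
  have "0 < a^2" using False by simp
  with \<open>a^2 \<le> E\<close> have "0 < E" by (rule order.strict_trans2[rotated])
  then have "\<bar>a / E\<bar> = \<bar>a\<bar> / E" by simp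
  also have "\<dots> \<le> \<bar>a\<bar> / a^2"
    by (rule divide_left_mono) (use \<open>a^2 \<le> E\<close> \<open>0 < a^2\<close> \<open>0 < E\<close> in auto)
  also have "a^2 = \<bar>a\<bar> * \<bar>a\<bar>" by (simp add: power2_eq_square)
  also have "\<bar>a\<bar> / (\<bar>a\<bar> * \<bar>a\<bar>) = 1 / \<bar>a\<bar>"
    using False by (intro nonzero_divide_mult_cancel_left) simp
  finally show ?thesis unfolding E_def .
qed simp

lemma phase_winding: "phase a (2 * pi) = phase a 0 + 2 * pi * sgn a"
  by (simp add: phase_def arg_lift_def)

lemma star_sol_iff_Im:
  "star_sol lam mu w t \<longleftrightarrow>
     Im (cis (- (w * t)) * phase_vector (cst lam) t * phase_vector (cst mu) t) = 0"
proof -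
  define a where "a = cst lam" define b where "b = cst mu"
  define s where "s = sin t" define c where "c = cos t"
  define S where "S = sin (w * t)" define C where "C = cos (w * t)"
  have Im: "Im (cis (- (w * t)) * phase_vector (cst lam) t * phase_vector (cst mu) t)
      = C * Im (phase_vector a t * phase_vector b t) - S * Re (phase_vector a t * phase_vector b t)"
    by (simp add: a_def b_def C_def S_def mult.assoc algebra_simps)
  have star: "star_sol lam mu w t = (if a + b = 0 then S = 0
      else if a * b = 0 then S * (- s) = C * ((a + b) * c)
      else S * (a * b * c^2 - s^2) = C * ((a + b) * s * c))"
    unfolding star_sol_def Let_def a_def b_def s_def c_def S_def C_def ..
  consider "a \<noteq> 0" "b \<noteq> 0" | "a = 0" "b \<noteq> 0" | "a \<noteq> 0" "b = 0" | "a = 0" "b = 0"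
    by blast
  then have "star_sol lam mu w t \<longleftrightarrow>
      C * Im (phase_vector a t * phase_vector b t) - S * Re (phase_vector a t * phase_vector b t) = 0"
  proof cases
    case 1
    then have prod: "phase_vector a t * phase_vector b t = Complex (a * b * c^2 - s^2) ((a + b) * s * c)"
      by (simp add: phase_vector_def complex_eq_iff power2_eq_square algebra_simps s_def c_def)
    show ?thesis
    proof (cases "a + b = 0")
      case True
      then have "C * Im (phase_vector a t * phase_vector b t) - S * Re (phase_vector a t * phase_vector b t)
          = S * (a^2 * c^2 + s^2)"
        unfolding prod by (simp add: eq_neg_iff_add_eq_0[symmetric] power2_eq_square algebra_simps)
      moreover have "0 < a^2 * c^2 + s^2"
        using cos_sin_weighted_pos[of "a^2" t] 1 by (simp add: c_def s_def)
      ultimately show ?thesis using True unfolding star by simp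
    next
      case False
      then show ?thesis using 1 unfolding star prod by (simp add: algebra_simps) (rule eq_commute)
    qed
  next
    case 2
    then have "phase_vector a t * phase_vector b t = Complex (- s) (b * c)"
      by (simp add: phase_vector_def complex_eq_iff s_def c_def)
    then show ?thesis using 2 unfolding star by (simp add: algebra_simps) (rule iffI; linarith)
  next
    case 3
    then have "phase_vector a t * phase_vector b t = Complex (- s) (a * c)"
      by (simp add: phase_vector_def complex_eq_iff s_def c_def)
    then show ?thesis using 3 unfolding star by (simp add: algebra_simps) (rule iffI; linarith)
  next
    case 4
    then show ?thesis unfolding star by (simp add: phase_vector_def)
  qed
  then show ?thesis by (simp only: Im)
qed

lemma Complex_eq_phase_vector:
  "Complex (a * cos t) (sin t) = of_real (if a = 0 then sin t else 1) * phase_vector a t"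
  by (simp add: phase_vector_def complex_eq_iff)

lemma poly_Dw_cis_eq_0_iff_star_sol:
  assumes "0 \<le> lam" "0 \<le> mu"
  shows "poly (Dw lam mu w) (cis t) = 0 \<longleftrightarrow>
           star_sol lam mu w t \<or> ((lam = 1 \<or> mu = 1) \<and> sin t = 0)"
proof -
  define f where "f a = (if a = 0 then sin t else 1)" for a :: real
  have "cis (- (w * t)) * Complex (cst lam * cos t) (sin t) * Complex (cst mu * cos t) (sin t)
      = (f (cst lam) * f (cst mu)) *\<^sub>R (cis (- (w * t)) * phase_vector (cst lam) t * phase_vector (cst mu) t)"
    unfolding Complex_eq_phase_vector f_def by (simp add: scaleR_conv_of_real mult_ac)
  then have "Im (cis (- (w * t)) * Complex (cst lam * cos t) (sin t) * Complex (cst mu * cos t) (sin t))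
      = f (cst lam) * f (cst mu) * Im (cis (- (w * t)) * phase_vector (cst lam) t * phase_vector (cst mu) t)"
    by (simp only: scaleR_complex.sel)
  moreover have "f (cst lam) = 0 \<longleftrightarrow> lam = 1 \<and> sin t = 0" "f (cst mu) = 0 \<longleftrightarrow> mu = 1 \<and> sin t = 0"
    using cst_eq_0_iff assms by (auto simp: f_def)
  ultimately show ?thesis
    unfolding poly_Dw_cis_eq_0_iff star_sol_iff_Im by auto
qed

lemma star_sol_iff_sin_phase:
  "star_sol lam mu w t \<longleftrightarrow> sin (w * t - (phase (cst lam) t + phase (cst mu) t)) = 0"
proof -
  obtain \<rho> \<rho>' where "\<rho> > 0" "\<rho>' > 0"
    and "phase_vector (cst lam) t = of_real \<rho> * cis (phase (cst lam) t)"
    and "phase_vector (cst mu) t = of_real \<rho>' * cis (phase (cst mu) t)"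
    using phase_polar by metis
  then have "Im (cis (- (w * t)) * phase_vector (cst lam) t * phase_vector (cst mu) t)
      = - (\<rho> * \<rho>') * sin (w * t - (phase (cst lam) t + phase (cst mu) t))"
    by (simp add: sin_diff sin_add cos_add algebra_simps)
  with \<open>\<rho> > 0\<close> \<open>\<rho>' > 0\<close> show ?thesis
    unfolding star_sol_iff_Im by simp
qed

section \<open>Counting the solutions of (*)\<close>

lemma card_sin_zeros_eq_card_multiples:
  fixes g :: "real \<Rightarrow> real"
  assumes cont: "continuous_on {0..2*pi} g"
    and mono: "\<And>x y. 0 \<le> x \<Longrightarrow> x < y \<Longrightarrow> y \<le> 2*pi \<Longrightarrow> g x < g y"
  shows "card {t. 0 \<le> t \<and> t < 2*pi \<and> sin (g t) = 0}
       = card {j::int. g 0 \<le> j * pi \<and> j * pi < g (2*pi)}"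
proof (rule bij_betw_same_card[of "\<lambda>t. \<lfloor>g t / pi\<rfloor>"], rule bij_betw_imageI)
  define S where "S = {t. 0 \<le> t \<and> t < 2*pi \<and> sin (g t) = 0}"
  define K where "K = {j::int. g 0 \<le> j * pi \<and> j * pi < g (2*pi)}"
  have mono': "g x \<le> g y" if "0 \<le> x" "x \<le> y" "y \<le> 2*pi" for x y
    using mono[of x y] that by (cases "x = y") auto
  have multiple: "g t = \<lfloor>g t / pi\<rfloor> * pi" if "t \<in> S" for t
  proof -
    from that obtain j :: int where "g t = j * pi" by (auto simp: S_def sin_zero_iff_int2)
    then show ?thesis by simp
  qed
  show "inj_on (\<lambda>t. \<lfloor>g t / pi\<rfloor>) S"
  proof (rule inj_onI)
    fix x y assume "x \<in> S" "y \<in> S" "\<lfloor>g x / pi\<rfloor> = \<lfloor>g y / pi\<rfloor>"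
    then have "g x = g y" using multiple by metis
    with \<open>x \<in> S\<close> \<open>y \<in> S\<close> show "x = y"
      using mono[of x y] mono[of y x] by (cases x y rule: linorder_cases) (auto simp: S_def)
  qed
  show "(\<lambda>t. \<lfloor>g t / pi\<rfloor>) ` S = K"
  proof
    show "(\<lambda>t. \<lfloor>g t / pi\<rfloor>) ` S \<subseteq> K"
    proof
      fix j assume "j \<in> (\<lambda>t. \<lfloor>g t / pi\<rfloor>) ` S"
      then obtain t where t: "t \<in> S" "j = \<lfloor>g t / pi\<rfloor>" by auto
      then have "g 0 \<le> g t" "g t < g (2*pi)"
        using mono' mono by (auto simp: S_def)
      with multiple[OF t(1)] show "j \<in> K" by (simp add: K_def t(2))
    qed
    show "K \<subseteq> (\<lambda>t. \<lfloor>g t / pi\<rfloor>) ` S"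
    proof
      fix j assume j: "j \<in> K"
      then obtain x where x: "0 \<le> x" "x \<le> 2*pi" "g x = j * pi"
        using IVT'[of g 0 "j * pi" "2*pi"] cont by (auto simp: K_def)
      moreover have "x \<noteq> 2*pi" using x j by (auto simp: K_def)
      ultimately have "x \<in> S" by (auto simp: S_def sin_zero_iff_int2)
      moreover have "j = \<lfloor>g x / pi\<rfloor>" using x by simp
      ultimately show "j \<in> (\<lambda>t. \<lfloor>g t / pi\<rfloor>) ` S" by blast
    qed
  qed
qed

lemma card_sin_zeros_increasing:
  fixes g :: "real \<Rightarrow> real" and k :: int
  assumes cont: "continuous_on {0..2*pi} g"
    and mono: "\<And>x y. 0 \<le> x \<Longrightarrow> x < y \<Longrightarrow> y \<le> 2*pi \<Longrightarrow> g x < g y"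
    and winding: "g (2*pi) = g 0 + of_int k * pi"
  shows "int (card {t. 0 \<le> t \<and> t < 2*pi \<and> sin (g t) = 0}) = k"
proof -
  have "{j::int. g 0 \<le> j * pi \<and> j * pi < g (2*pi)} = {\<lceil>g 0 / pi\<rceil> ..< \<lceil>g 0 / pi\<rceil> + k}"
  proof (rule set_eqI)
    fix j :: int
    have "g 0 \<le> j * pi \<and> j * pi < g (2*pi) \<longleftrightarrow> g 0 / pi \<le> j \<and> j - k < g 0 / pi"
      unfolding winding by (auto simp: field_simps)
    also have "\<dots> \<longleftrightarrow> \<lceil>g 0 / pi\<rceil> \<le> j \<and> j - k < \<lceil>g 0 / pi\<rceil>"
      by (simp add: ceiling_le_iff less_ceiling_iff)
    finally show "j \<in> {j. g 0 \<le> j * pi \<and> j * pi < g (2*pi)} \<longleftrightarrow> j \<in> {\<lceil>g 0 / pi\<rceil> ..< \<lceil>g 0 / pi\<rceil> + k}"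
      by auto
  qed
  moreover have "0 < k"
    using mono[of 0 "2*pi"] winding by (simp add: zero_less_mult_iff)
  ultimately show ?thesis
    using card_sin_zeros_eq_card_multiples[OF cont mono] by simp
qed

lemma card_sin_zeros_perturbed_linear:
  fixes P P' :: "real \<Rightarrow> real" and w :: nat and m :: int
  assumes deriv: "\<And>t. (P has_real_derivative P' t) (at t)"
    and bound: "\<And>t. \<bar>P' t\<bar> \<le> B" and "B < w"
    and winding: "P (2*pi) = P 0 + of_int m * pi"
  shows "int (card {t. 0 \<le> t \<and> t < 2*pi \<and> sin (real w * t - P t) = 0}) = 2 * int w - m"
proof -
  define g where "g t = real w * t - P t" for t
  have g_deriv: "(g has_real_derivative w - P' t) (at t)" for t
    using DERIV_diff[OF DERIV_cmult[OF DERIV_ident] deriv] unfolding g_def[abs_def] by simp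
  have pos: "0 < w - P' t" for t
    using bound[of t] \<open>B < w\<close> by linarith
  have "\<exists>d. (g has_real_derivative d) (at t) \<and> 0 < d" for t
    using g_deriv pos by blast
  then have mono: "g x < g y" if "0 \<le> x" "x < y" "y \<le> 2*pi" for x y
    using DERIV_pos_imp_increasing[OF \<open>x < y\<close>] by blast
  have cont: "continuous_on {0..2*pi} g"
    by (intro continuous_at_imp_continuous_on ballI DERIV_isCont[OF g_deriv])
  have "g (2*pi) = g 0 + of_int (2 * int w - m) * pi"
    unfolding g_def winding by (simp add: algebra_simps)
  from card_sin_zeros_increasing[OF cont mono this] show ?thesis
    by (simp add: g_def)
qed

lemma nsol_eventually:
  "eventually (\<lambda>w. real (nsol lam mu w) = 2 * real w - 2 * sgn (cst lam) - 2 * sgn (cst mu))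
     sequentially"
proof -
  define a where "a = cst lam" define b where "b = cst mu"
  define B where "B = 1 / \<bar>a\<bar> + 1 / \<bar>b\<bar>"
  define P where "P t = phase a t + phase b t" for t
  define P' where "P' t = a / (a^2 * (cos t)^2 + (sin t)^2) + b / (b^2 * (cos t)^2 + (sin t)^2)" for t
  have deriv: "(P has_real_derivative P' t) (at t)" for t
    unfolding P_def[abs_def] P'_def by (intro DERIV_add phase_has_derivative)
  have bound: "\<bar>P' t\<bar> \<le> B" for t
    using phase_derivative_bound[OF abs_cst_le_1, of lam t] phase_derivative_bound[OF abs_cst_le_1, of mu t]
    unfolding P'_def B_def a_def b_def by linarith
  have "sgn a \<in> \<int>" "sgn b \<in> \<int>" by (simp_all add: sgn_real_def)
  then obtain m :: int where m: "of_int m = 2 * sgn a + 2 * sgn b" by (metis Ints_cases Ints_add Ints_mult Ints_numeral)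
  have winding: "P (2*pi) = P 0 + of_int m * pi"
    unfolding P_def m phase_winding by (simp add: algebra_simps)
  have "eventually (\<lambda>w. B < real w) sequentially"
    using filterlim_real_sequentially by (simp add: filterlim_at_top_dense)
  then show ?thesis
  proof eventually_elim
    case (elim w)
    have "nsol lam mu w = card {t. 0 \<le> t \<and> t < 2*pi \<and> sin (real w * t - P t) = 0}"
      unfolding nsol_def P_def a_def b_def star_sol_iff_sin_phase ..
    then have "int (nsol lam mu w) = 2 * int w - m"
      using card_sin_zeros_perturbed_linear[OF deriv bound elim winding] by simp
    then have "real_of_int (int (nsol lam mu w)) = of_int (2 * int w - m)" by (rule arg_cong)
    then show ?case using m by (simp add: a_def b_def)
  qed
qed

lemma card_le_sum_order:
  fixes p :: "complex poly"
  assumes "p \<noteq> 0" "A \<subseteq> {z. poly p z = 0}"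
  shows "card A \<le> (\<Sum>z\<in>A. order z p)"
proof -
  have "finite A" using assms(2) by (rule finite_subset) (rule poly_roots_finite[OF assms(1)])
  then have "card A = (\<Sum>z\<in>A. 1)" by simp
  also have "\<dots> \<le> (\<Sum>z\<in>A. order z p)"
    using assms by (intro sum_mono) (auto simp: Suc_le_eq order_root)
  finally show ?thesis .
qed

lemma sum_order_mono:
  fixes p :: "complex poly"
  assumes "p \<noteq> 0" "A \<subseteq> B" "B \<subseteq> {z. poly p z = 0}"
  shows "(\<Sum>z\<in>A. order z p) \<le> (\<Sum>z\<in>B. order z p)"
  by (rule sum_mono2[OF finite_subset[OF assms(3) poly_roots_finite[OF assms(1)]] assms(2)]) simp

lemma card_le_circle_zeros:
  fixes p :: "complex poly"
  assumes "p \<noteq> 0" "X \<subseteq> {z. poly p z = 0 \<and> cmod z = 1}"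
  shows "card X \<le> circle_zeros p"
  unfolding circle_zeros_def
  using card_le_sum_order[OF assms(1), of X] sum_order_mono[OF assms(1,2)] assms(2) by fastforce

lemma card_le_real_zeros:
  fixes p :: "complex poly"
  assumes "p \<noteq> 0" "X \<subseteq> {z. poly p z = 0 \<and> Im z = 0 \<and> cmod z \<noteq> 1}"
  shows "card X \<le> real_zeros p"
  unfolding real_zeros_def
  using card_le_sum_order[OF assms(1), of X] sum_order_mono[OF assms(1,2)] assms(2) by fastforce

lemma circle_zeros_add_real_zeros_le_degree:
  fixes p :: "complex poly"
  assumes "p \<noteq> 0"
  shows "circle_zeros p + real_zeros p \<le> degree p"
proof -
  define C where "C = {z. poly p z = 0 \<and> cmod z = 1}"
  define R where "R = {z. poly p z = 0 \<and> Im z = 0 \<and> cmod z \<noteq> 1}"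
  have "finite C" "finite R"
    using poly_roots_finite[OF assms] by (auto simp: C_def R_def intro: finite_subset)
  then have "circle_zeros p + real_zeros p = (\<Sum>z\<in>C \<union> R. order z p)"
    unfolding circle_zeros_def real_zeros_def C_def[symmetric] R_def[symmetric]
    by (rule sum.union_disjoint[symmetric]) (auto simp: C_def R_def)
  also have "\<dots> \<le> (\<Sum>z | poly p z = 0. order z p)"
    by (rule sum_order_mono[OF assms]) (auto simp: C_def R_def)
  also have "\<dots> \<le> degree p"
    by (rule sum_order_le_degree[OF assms])
  finally show ?thesis .
qed

lemma inj_on_cis: "inj_on cis {t. 0 \<le> t \<and> t < 2*pi}"
proof (rule inj_onI)
  fix x y assume x: "x \<in> {t. 0 \<le> t \<and> t < 2*pi}" and y: "y \<in> {t. 0 \<le> t \<and> t < 2*pi}"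
    and "cis x = cis y"
  then have "sin y = sin x \<and> cos y = cos x" by (metis cis.sel)
  then obtain n :: int where n: "y = x + 2 * pi * n" using sin_cos_eq_iff by blast
  with x y have "\<bar>2 * pi * n\<bar> < 2 * pi" by auto
  then have "\<bar>real_of_int n\<bar> < 1" by (simp add: abs_mult)
  then show "x = y" using n by simp
qed

lemma card_cis_star_sol: "card (cis ` {t. 0 \<le> t \<and> t < 2*pi \<and> star_sol lam mu w t}) = nsol lam mu w"
  unfolding nsol_def by (rule card_image) (rule inj_on_subset[OF inj_on_cis], auto)

lemma cis_star_sol_subset:
  assumes "0 \<le> lam" "0 \<le> mu"
  shows "cis ` {t. 0 \<le> t \<and> t < 2*pi \<and> star_sol lam mu w t}
           \<subseteq> {z. poly (Dw lam mu w) z = 0 \<and> cmod z = 1}"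
  using poly_Dw_cis_eq_0_iff_star_sol[OF assms] by auto

lemma star_sol_imp_sin_nonzero:
  assumes "cst lam + cst mu \<noteq> 0" "cst lam * cst mu = 0" "star_sol lam mu w t"
  shows "sin t \<noteq> 0"
proof
  assume "sin t = 0"
  then obtain i :: int where "t = i * pi" using sin_zero_iff_int2 by blast
  then have "sin (w * t) = 0" using sin_zero_iff_int2[of "w * t"]
    by (metis mult.assoc of_int_mult of_int_of_nat_eq)
  then have "cos (w * t) \<noteq> 0" "cos t \<noteq> 0"
    using sin_cos_squared_add[of "w * t"] sin_cos_squared_add[of t] \<open>sin t = 0\<close> by auto
  moreover have "sin (w * t) * (- sin t) = cos (w * t) * ((cst lam + cst mu) * cos t)"
    using assms by (simp add: star_sol_def Let_def)
  ultimately show False using \<open>sin t = 0\<close> \<open>sin (w * t) = 0\<close> assms(1) by simp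
qed

lemma Dw_one_one: "Dw 1 1 w = [:1, 0, -1:] * [:1, 0, -1:] * (1 - monom 1 (2*w))"
  unfolding Dw_def by (simp add: right_diff_distrib)

lemma order_Dw_one_one_ge:
  assumes "1 \<le> w" "z^2 = 1"
  shows "3 \<le> order z (Dw 1 1 w)"
proof -
  have "[:-z, 1:] dvd [:1, 0, -1:]"
    using assms(2) by (simp add: poly_eq_0_iff_dvd[symmetric] power2_eq_square)
  moreover have "[:-z, 1:] dvd (1 - monom 1 (2*w) :: complex poly)"
    using assms(2) by (simp add: poly_eq_0_iff_dvd[symmetric] poly_monom power_mult)
  ultimately have "[:-z, 1:]^3 dvd Dw 1 1 w"
    unfolding Dw_one_one power3_eq_cube by (intro mult_dvd_mono)
  then show ?thesis using order_divides Dw_nonzero[OF assms(1)] by blast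
qed

lemma nsol_one_one: "1 \<le> w \<Longrightarrow> nsol 1 1 w = 2 * w"
  using card_sin_zeros_perturbed_linear[of "\<lambda>t. 0" "\<lambda>t. 0" 0 w 0]
  by (simp add: nsol_def star_sol_def cst_def)

lemma Dw_one_one_zeros:
  assumes "1 \<le> w"
  shows "circle_zeros (Dw 1 1 w) = 2*w + 4 \<and> order 1 (Dw 1 1 w) = 3 \<and> order (-1) (Dw 1 1 w) = 3"
proof -
  define p where "p = Dw 1 1 w"
  define X where "X = cis ` {t. 0 \<le> t \<and> t < 2*pi \<and> star_sol 1 1 w t}"
  have p0: "p \<noteq> 0" using Dw_nonzero[OF assms] by (simp add: p_def)
  have X_roots: "X \<subseteq> {z. poly p z = 0 \<and> cmod z = 1}"
    using cis_star_sol_subset[of 1 1 w] by (simp add: X_def p_def)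
  have "finite X" using X_roots by (intro finite_subset[OF _ poly_roots_finite[OF p0]]) auto
  have star: "star_sol 1 1 w t \<longleftrightarrow> sin (real w * t) = 0" for t :: real
    by (simp add: star_sol_def cst_def)
  have "0 \<in> {t. 0 \<le> t \<and> t < 2*pi \<and> star_sol 1 1 w t}" "pi \<in> {t. 0 \<le> t \<and> t < 2*pi \<and> star_sol 1 1 w t}"
    using star[of 0] star[of pi] by simp_all
  then have pm1: "1 \<in> X" "-1 \<in> X"
    unfolding X_def by (metis cis_zero image_eqI, metis cis_pi image_eqI)
  have "card (X - {1, -1}) = 2*w - 2"
    using card_cis_star_sol[of 1 1 w] nsol_one_one[OF assms] pm1 \<open>finite X\<close>
    by (simp add: X_def card_Diff_subset)
  moreover have "card (X - {1, -1}) \<le> (\<Sum>z\<in>X - {1, -1}. order z p)"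
    by (rule card_le_sum_order[OF p0]) (use X_roots in auto)
  ultimately have "2*w - 2 + order 1 p + order (-1) p \<le> (\<Sum>z\<in>X. order z p)"
    using pm1 \<open>finite X\<close> sum.subset_diff[of "{1, -1}" X "\<lambda>z. order z p"] by simp
  also have "\<dots> \<le> circle_zeros p"
    unfolding circle_zeros_def by (rule sum_order_mono[OF p0 X_roots]) auto
  finally have lower: "2*w - 2 + order 1 p + order (-1) p \<le> circle_zeros p" .
  have "circle_zeros p \<le> 2*w + 4"
    using circle_zeros_add_real_zeros_le_degree[OF p0] degree_Dw_le[of 1 1 w] by (simp add: p_def)
  moreover have "3 \<le> order 1 p" "3 \<le> order (-1) p"
    using order_Dw_one_one_ge[OF assms] by (simp_all add: p_def)
  ultimately show ?thesis using lower assms unfolding p_def by linarith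
qed

definition num_eq_one :: "real \<Rightarrow> real \<Rightarrow> nat" where
  "num_eq_one lam mu = of_bool (lam = 1) + of_bool (mu = 1)"

definition num_gt_one :: "real \<Rightarrow> real \<Rightarrow> nat" where
  "num_gt_one lam mu = of_bool (1 < lam) + of_bool (1 < mu)"

lemma nsol_add_le_circle_zeros:
  assumes "1 \<le> w" "0 \<le> lam" "0 \<le> mu"
  shows "nsol lam mu w + 2 * num_eq_one lam mu \<le> circle_zeros (Dw lam mu w)"
proof -
  define X where "X = cis ` {t. 0 \<le> t \<and> t < 2*pi \<and> star_sol lam mu w t}"
  have X_roots: "X \<subseteq> {z. poly (Dw lam mu w) z = 0 \<and> cmod z = 1}"
    unfolding X_def by (rule cis_star_sol_subset[OF assms(2,3)])
  have card_X: "card X = nsol lam mu w" unfolding X_def by (rule card_cis_star_sol)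
  consider "lam \<noteq> 1" "mu \<noteq> 1" | "lam = 1" "mu = 1" | "(lam = 1) \<noteq> (mu = 1)" by blast
  then show ?thesis
  proof cases
    case 1
    then show ?thesis
      using card_le_circle_zeros[OF Dw_nonzero[OF assms(1)] X_roots] card_X by (simp add: num_eq_one_def)
  next
    case 2
    then show ?thesis
      using Dw_one_one_zeros[OF assms(1)] nsol_one_one[OF assms(1)] by (simp add: num_eq_one_def)
  next
    case 3
    moreover have "cst lam = 0 \<longleftrightarrow> lam = 1" "cst mu = 0 \<longleftrightarrow> mu = 1"
      using cst_eq_0_iff assms(2,3) by auto
    ultimately have "cst lam + cst mu \<noteq> 0" "cst lam * cst mu = 0" by auto
    then have "sin t \<noteq> 0" if "star_sol lam mu w t" for t
      using star_sol_imp_sin_nonzero that by blast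
    then have pm1: "1 \<notin> X" "-1 \<notin> X"
      unfolding X_def by (auto simp: complex_eq_iff)
    have "finite X"
      using X_roots by (intro finite_subset[OF _ poly_roots_finite[OF Dw_nonzero[OF assms(1)]]]) auto
    have "insert 1 (insert (-1) X) \<subseteq> {z. poly (Dw lam mu w) z = 0 \<and> cmod z = 1}"
      using X_roots poly_Dw_one poly_Dw_minus_one by auto
    from card_le_circle_zeros[OF Dw_nonzero[OF assms(1)] this]
    have "card (insert 1 (insert (-1) X)) \<le> circle_zeros (Dw lam mu w)" .
    moreover have "card (insert 1 (insert (-1) X)) = nsol lam mu w + 2"
      using pm1 card_X \<open>finite X\<close> by simp
    moreover have "num_eq_one lam mu = 1" using 3 by (auto simp: num_eq_one_def)
    ultimately show ?thesis by simp
  qed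
qed

section \<open>Real zeros\<close>

definition Dw_real :: "real \<Rightarrow> real \<Rightarrow> nat \<Rightarrow> real \<Rightarrow> real" where
  "Dw_real lam mu w p = (1 - lam^2 * p^2) * (1 - mu^2 * p^2) - (lam^2 - p^2) * (mu^2 - p^2) * p^(2*w)"

lemma poly_Dw_of_real: "poly (Dw lam mu w) (of_real p) = of_real (Dw_real lam mu w p)"
  by (simp add: poly_Dw Dw_real_def)

lemma Dw_real_tendsto:
  assumes "0 \<le> p" "p < 1"
  shows "(\<lambda>w. Dw_real lam mu w p) \<longlonglongrightarrow> (1 - (lam * p)^2) * (1 - (mu * p)^2)"
proof -
  have "(\<lambda>w. (p^2)^w) \<longlonglongrightarrow> 0"
    using assms by (intro LIMSEQ_power_zero) (simp add: abs_square_less_1)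
  from tendsto_diff[OF tendsto_const tendsto_mult[OF tendsto_const this]]
  have "(\<lambda>w. (1 - (lam * p)^2) * (1 - (mu * p)^2) - (lam^2 - p^2) * (mu^2 - p^2) * (p^2)^w)
      \<longlonglongrightarrow> (1 - (lam * p)^2) * (1 - (mu * p)^2) - (lam^2 - p^2) * (mu^2 - p^2) * 0" .
  then show ?thesis by (simp add: Dw_real_def power_mult power_mult_distrib)
qed

lemma eventually_root_between:
  fixes f :: "nat \<Rightarrow> real \<Rightarrow> real"
  assumes cont: "\<And>w. continuous_on {a..b} (f w)" and "a < b"
    and lim_a: "(\<lambda>w. f w a) \<longlonglongrightarrow> l" and lim_b: "(\<lambda>w. f w b) \<longlonglongrightarrow> l'" and "l * l' < 0"
  shows "eventually (\<lambda>w. \<exists>r. a < r \<and> r < b \<and> f w r = 0) sequentially"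
proof -
  have "(\<lambda>w. f w a * f w b) \<longlonglongrightarrow> l * l'" by (intro tendsto_mult lim_a lim_b)
  from order_tendstoD(2)[OF this \<open>l * l' < 0\<close>]
  show ?thesis
  proof eventually_elim
    case (elim w)
    have "\<exists>r. a \<le> r \<and> r \<le> b \<and> f w r = 0"
    proof (cases "f w a < 0")
      case True
      with elim have "0 < f w b" by (simp add: mult_less_0_iff)
      with True show ?thesis using \<open>a < b\<close> cont by (intro IVT') auto
    next
      case False
      with elim have "f w b < 0" by (simp add: mult_less_0_iff)
      with False show ?thesis using \<open>a < b\<close> cont by (intro IVT2') auto
    qed
    then obtain r where "a \<le> r" "r \<le> b" "f w r = 0" by blast
    moreover have "r \<noteq> a" "r \<noteq> b" using elim \<open>f w r = 0\<close> by auto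
    ultimately show ?case by (intro exI[of _ r]) auto
  qed
qed

lemma card_reflections:
  fixes R :: "real set"
  assumes "finite R" "R \<subseteq> {0<..<1}"
  shows "card (R \<union> uminus ` R \<union> inverse ` R \<union> (\<lambda>r. - inverse r) ` R) = 4 * card R"
proof -
  define A where "A = uminus ` R"
  define B where "B = inverse ` R"
  define C where "C = (\<lambda>r. - inverse r) ` R"
  have R: "0 < r \<and> r < 1" if "r \<in> R" for r
    using assms(2) that by auto
  have inv: "1 < inverse r" if "r \<in> R" for r
    using R[OF that] by (simp add: one_less_inverse)
  have locA: "x < 0" "-1 < x" if "x \<in> A" for x
    using that R by (auto simp: A_def)
  have locB: "1 < x" if "x \<in> B" for x
    using that inv by (auto simp: B_def)
  have locC: "x < -1" if "x \<in> C" for x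
    using that inv by (auto simp: C_def)
  have disj: "R \<inter> A = {}" "(R \<union> A) \<inter> B = {}" "(R \<union> A \<union> B) \<inter> C = {}"
    by (fastforce dest: R locA locB locC)+
  have "card A = card R" "card B = card R" "card C = card R"
    unfolding A_def B_def C_def by (auto intro!: card_image inj_onI)
  moreover have "finite A" "finite B" "finite C"
    unfolding A_def B_def C_def using assms(1) by simp_all
  ultimately show ?thesis
    using assms(1) unfolding A_def[symmetric] B_def[symmetric] C_def[symmetric]
    by (simp add: card_Un_disjoint[OF _ _ disj(3)] card_Un_disjoint[OF _ _ disj(2)]
        card_Un_disjoint[OF _ _ disj(1)])
qed

lemma real_zeros_Dw_ge:
  assumes "1 \<le> w" "finite R" "R \<subseteq> {r. 0 < r \<and> r < 1 \<and> Dw_real lam mu w r = 0}"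
  shows "4 * card R \<le> real_zeros (Dw lam mu w)"
proof -
  define S where "S = R \<union> uminus ` R \<union> inverse ` R \<union> (\<lambda>r. - inverse r) ` R"
  have "card S = 4 * card R"
    unfolding S_def using assms(2,3) by (intro card_reflections) auto
  moreover have "card (of_real ` S :: complex set) = card S"
    by (intro card_image inj_onI) simp
  moreover have "of_real x \<in> {z. poly (Dw lam mu w) z = 0 \<and> Im z = 0 \<and> cmod z \<noteq> 1}"
    if x_in: "x \<in> S" for x
  proof -
    obtain r where r: "0 < r" "r < 1" "Dw_real lam mu w r = 0"
      and x: "x = r \<or> x = - r \<or> x = 1 / r \<or> x = - 1 / r"
      using x_in assms(3) by (auto simp: S_def divide_inverse)
    have "poly (Dw lam mu w) (of_real r) = 0"
      using r(3) by (simp add: poly_Dw_of_real)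
    then have "poly (Dw lam mu w) (of_real x) = 0"
      using x poly_Dw_real_root_reflections[OF assms(1)] by blast
    moreover have "\<bar>x\<bar> \<noteq> 1"
      using x r by (auto simp: divide_inverse)
    ultimately show ?thesis by simp
  qed
  then have "of_real ` S \<subseteq> {z. poly (Dw lam mu w) z = 0 \<and> Im z = 0 \<and> cmod z \<noteq> 1}"
    by blast
  from card_le_real_zeros[OF Dw_nonzero[OF assms(1)] this]
  have "card (of_real ` S :: complex set) \<le> real_zeros (Dw lam mu w)" .
  ultimately show ?thesis by linarith
qed

lemma continuous_on_Dw_real: "continuous_on S (Dw_real lam mu w)"
  unfolding Dw_real_def[abs_def] by (intro continuous_intros)

lemma one_minus_square_pos: "0 \<le> x \<Longrightarrow> x < 1 \<Longrightarrow> 0 < 1 - (x::real)^2"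
  using abs_square_less_1[of x] by simp

lemma one_minus_square_neg: "1 < x \<Longrightarrow> 1 - (x::real)^2 < 0"
  using abs_square_less_1[of x] one_less_power[of x 2] by simp

lemma Dw_real_root_eventually:
  assumes "1 < lam" "0 \<le> mu" "mu \<le> 1"
  shows "eventually (\<lambda>w. \<exists>r. 0 < r \<and> r < 1 \<and> Dw_real lam mu w r = 0) sequentially"
proof -
  define q1 where "q1 = 1 / (2 * lam)"
  define q2 where "q2 = 2 / (lam + 1)"
  have q: "0 < q1" "q1 < q2" "q2 < 1"
    using assms by (auto simp: q1_def q2_def field_simps)
  have "mu * q1 \<le> q1" "mu * q2 \<le> q2"
    using assms q by (simp_all add: mult_left_le_one_le)
  then have "mu * q1 < 1" "mu * q2 < 1" using q by linarith+
  moreover have "lam * q1 < 1" "1 < lam * q2"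
    using assms by (simp_all add: q1_def q2_def field_simps)
  moreover have "0 \<le> lam * q1" "0 \<le> mu * q1" "0 \<le> mu * q2" using assms q by simp_all
  ultimately have "0 < (1 - (lam * q1)^2) * (1 - (mu * q1)^2)"
      and "(1 - (lam * q2)^2) * (1 - (mu * q2)^2) < 0"
    by (auto intro: mult_pos_pos mult_neg_pos one_minus_square_pos one_minus_square_neg)
  then have "(1 - (lam * q1)^2) * (1 - (mu * q1)^2) * ((1 - (lam * q2)^2) * (1 - (mu * q2)^2)) < 0"
    by (rule mult_pos_neg)
  moreover have "(\<lambda>w. Dw_real lam mu w q) \<longlonglongrightarrow> (1 - (lam * q)^2) * (1 - (mu * q)^2)"
    if "q \<in> {q1, q2}" for q
    using that q by (intro Dw_real_tendsto) auto
  ultimately have "eventually (\<lambda>w. \<exists>r. q1 < r \<and> r < q2 \<and> Dw_real lam mu w r = 0) sequentially"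
    by (intro eventually_root_between[OF continuous_on_Dw_real q(2)]) (auto intro: mult_pos_neg)
  then show ?thesis
  proof eventually_elim
    case (elim w)
    then obtain r where "q1 < r" "r < q2" "Dw_real lam mu w r = 0" by blast
    with q show ?case by (intro exI[of _ r]) auto
  qed
qed

lemma Dw_real_two_roots_eventually:
  assumes "1 < mu" "mu < lam"
  shows "eventually (\<lambda>w. \<exists>r r'. r \<noteq> r' \<and> {r, r'} \<subseteq> {r. 0 < r \<and> r < 1 \<and> Dw_real lam mu w r = 0})
           sequentially"
proof -
  define q0 where "q0 = 1 / (2 * lam)"
  define q1 where "q1 = 2 / (lam + mu)"
  define q2 where "q2 = 2 / (mu + 1)"
  have q: "0 < q0" "q0 < q1" "q1 < q2" "q2 < 1"
    using assms by (auto simp: q0_def q1_def q2_def field_simps)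
  have "lam * q0 < 1" "mu * q0 < 1" "1 < lam * q1" "mu * q1 < 1" "1 < lam * q2" "1 < mu * q2"
    using assms by (simp_all add: q0_def q1_def q2_def field_simps)
  moreover have "0 \<le> lam * q0" "0 \<le> mu * q0" "0 \<le> mu * q1" using assms q by simp_all
  ultimately have A0: "0 < (1 - (lam * q0)^2) * (1 - (mu * q0)^2)"
      and A1: "(1 - (lam * q1)^2) * (1 - (mu * q1)^2) < 0"
      and A2: "0 < (1 - (lam * q2)^2) * (1 - (mu * q2)^2)"
    by (auto intro: mult_pos_pos one_minus_square_pos mult_neg_pos one_minus_square_neg mult_neg_neg)
  have L: "(\<lambda>w. Dw_real lam mu w q) \<longlonglongrightarrow> (1 - (lam * q)^2) * (1 - (mu * q)^2)"
    if "q \<in> {q0, q1, q2}" for q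
    using that q by (intro Dw_real_tendsto) auto
  have "eventually (\<lambda>w. \<exists>r. q0 < r \<and> r < q1 \<and> Dw_real lam mu w r = 0) sequentially"
    using A0 A1 by (intro eventually_root_between[OF continuous_on_Dw_real q(2) L L])
      (auto intro: mult_pos_neg)
  moreover have "eventually (\<lambda>w. \<exists>r. q1 < r \<and> r < q2 \<and> Dw_real lam mu w r = 0) sequentially"
    using A1 A2 by (intro eventually_root_between[OF continuous_on_Dw_real q(3) L L])
      (auto intro: mult_neg_pos)
  ultimately show ?thesis
  proof eventually_elim
    case (elim w)
    then obtain r r' where "q0 < r" "r < q1" "Dw_real lam mu w r = 0"
      and "q1 < r'" "r' < q2" "Dw_real lam mu w r' = 0" by blast
    with q show ?case by (intro exI[of _ r] exI[of _ r']) auto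
  qed
qed

text \<open>For \<open>\<lambda> = \<mu>\<close> the two real roots in \<open>(0, 1)\<close> coalesce in the limit, so instead of a
  sign change of \<open>D\<^sub>w\<close> we use the factorisation \<open>D\<^sub>w = F\<^sub>- F\<^sub>+\<close> and find one root of each factor.\<close>

lemma Dw_real_two_roots_eventually_equal:
  assumes "1 < lam"
  shows "eventually (\<lambda>w. \<exists>r r'. r \<noteq> r' \<and> {r, r'} \<subseteq> {r. 0 < r \<and> r < 1 \<and> Dw_real lam lam w r = 0})
           sequentially"
proof -
  define q0 where "q0 = 1 / (2 * lam)"
  define q1 where "q1 = 2 / (lam + 1)"
  define F where "F s w p = (1 - (lam * p)^2) + s * ((lam^2 - p^2) * p^w)" for s :: real and w :: nat and p
  have factor: "Dw_real lam lam w p = F (-1) w p * F 1 w p" for w p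
    unfolding Dw_real_def F_def by (simp add: power_mult power_mult_distrib algebra_simps power2_eq_square)
  have q: "0 < q0" "q0 < q1" "q1 < 1"
    using assms by (auto simp: q0_def q1_def field_simps)
  have "0 \<le> lam * q0" "lam * q0 < 1" "1 < lam * q1"
    using assms by (simp_all add: q0_def q1_def field_simps)
  then have "(1 - (lam * q0)^2) * (1 - (lam * q1)^2) < 0"
    by (intro mult_pos_neg one_minus_square_pos one_minus_square_neg) auto
  moreover have lim: "(\<lambda>w. F s w p) \<longlonglongrightarrow> 1 - (lam * p)^2" if "0 \<le> p" "p < 1" for s p
  proof -
    have "(\<lambda>w. p^w) \<longlonglongrightarrow> 0" using that by (intro LIMSEQ_power_zero) simp
    then have "(\<lambda>w. s * ((lam^2 - p^2) * p^w)) \<longlonglongrightarrow> s * ((lam^2 - p^2) * 0)"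
      by (intro tendsto_mult tendsto_const)
    from tendsto_add[OF tendsto_const this, of "1 - (lam * p)^2"]
    show ?thesis unfolding F_def by simp
  qed
  moreover have "continuous_on {q0..q1} (F s w)" for s w
    unfolding F_def by (intro continuous_intros)
  ultimately have "eventually (\<lambda>w. \<exists>r. q0 < r \<and> r < q1 \<and> F s w r = 0) sequentially" for s
    using q by (intro eventually_root_between[OF _ q(2)] lim) auto
  from this[of "-1"] this[of 1] show ?thesis
  proof eventually_elim
    case (elim w)
    then obtain r r' where r: "q0 < r" "r < q1" "F (-1) w r = 0"
      and r': "q0 < r'" "r' < q1" "F 1 w r' = 0" by blast
    have "r \<noteq> r'"
    proof
      assume "r = r'"
      have "1 - (lam * r)^2 - (lam^2 - r^2) * r^w = 0" using r(3) by (simp add: F_def)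
      moreover have "1 - (lam * r)^2 + (lam^2 - r^2) * r^w = 0" using r'(3) \<open>r = r'\<close> by (simp add: F_def)
      ultimately have "(lam^2 - r^2) * r^w = 0" by linarith
      moreover have "r^2 < lam^2"
        using r q assms by (intro power_strict_mono) auto
      ultimately show False using r q by simp
    qed
    with r r' q show ?case by (intro exI[of _ r] exI[of _ r']) (auto simp: factor)
  qed
qed

lemma real_zeros_lower_eventually_ordered:
  assumes "0 \<le> mu" "mu \<le> lam"
  shows "eventually (\<lambda>w. 4 * num_gt_one lam mu \<le> real_zeros (Dw lam mu w)) sequentially"
proof -
  have two_roots: "4 * num_gt_one lam mu \<le> real_zeros (Dw lam mu w)"
    if "1 \<le> w" "r \<noteq> r'" "{r, r'} \<subseteq> {r. 0 < r \<and> r < 1 \<and> Dw_real lam mu w r = 0}" "1 < mu" "1 < lam"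
    for w r r'
    using real_zeros_Dw_ge[OF that(1) _ that(3)] that(2,4,5) by (simp add: num_gt_one_def)
  consider "lam \<le> 1" | "1 < lam" "mu \<le> 1" | "1 < mu" "mu < lam" | "1 < mu" "mu = lam"
    using assms(2) by linarith
  then show ?thesis
  proof cases
    case 1
    with assms(2) show ?thesis by (simp add: num_gt_one_def)
  next
    case 2
    from Dw_real_root_eventually[OF 2(1) assms(1) 2(2)] eventually_ge_at_top[of 1]
    show ?thesis
    proof eventually_elim
      case (elim w)
      then obtain r where "0 < r" "r < 1" "Dw_real lam mu w r = 0" by blast
      with real_zeros_Dw_ge[OF elim(2), of "{r}"] 2 show ?case by (simp add: num_gt_one_def)
    qed
  next
    case 3
    from Dw_real_two_roots_eventually[OF 3] eventually_ge_at_top[of 1]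
    show ?thesis
    proof eventually_elim
      case (elim w)
      with two_roots 3 show ?case by (meson less_trans)
    qed
  next
    case 4
    then have "1 < lam" by simp
    from Dw_real_two_roots_eventually_equal[OF this] eventually_ge_at_top[of 1]
    show ?thesis
    proof eventually_elim
      case (elim w)
      with two_roots 4 show ?case by (meson less_trans)
    qed
  qed
qed

lemma real_zeros_lower_eventually:
  assumes "0 \<le> lam" "0 \<le> mu"
  shows "eventually (\<lambda>w. 4 * num_gt_one lam mu \<le> real_zeros (Dw lam mu w)) sequentially"
proof (cases "mu \<le> lam")
  case True
  then show ?thesis using real_zeros_lower_eventually_ordered[OF assms(2)] by blast
next
  case False
  then have "eventually (\<lambda>w. 4 * num_gt_one mu lam \<le> real_zeros (Dw mu lam w)) sequentially"
    using real_zeros_lower_eventually_ordered[OF assms(1)] by simp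
  then show ?thesis by (simp add: Dw_swap num_gt_one_def add.commute)
qed

lemma zero_counts_eventually:
  assumes "0 \<le> lam" "0 \<le> mu"
  shows "eventually (\<lambda>w.
      nsol lam mu w + 2 * num_eq_one lam mu + 4 * num_gt_one lam mu = 2 * w + 4
      \<and> circle_zeros (Dw lam mu w) + 4 * num_gt_one lam mu = 2 * w + 4
      \<and> real_zeros (Dw lam mu w) = 4 * num_gt_one lam mu) sequentially"
proof -
  have sgn: "2 * sgn (cst lam) + 2 * sgn (cst mu)
      = 2 * real (num_eq_one lam mu) + 4 * real (num_gt_one lam mu) - 4"
    using sgn_cst[OF assms(1)] sgn_cst[OF assms(2)]
    by (auto simp: num_eq_one_def num_gt_one_def)
  from nsol_eventually[of lam mu] real_zeros_lower_eventually[OF assms] eventually_ge_at_top[of 1]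
  show ?thesis
  proof eventually_elim
    case (elim w)
    then have "real (nsol lam mu w + 2 * num_eq_one lam mu + 4 * num_gt_one lam mu) = real (2 * w + 4)"
      using sgn by simp
    then have nsol: "nsol lam mu w + 2 * num_eq_one lam mu + 4 * num_gt_one lam mu = 2 * w + 4"
      by (simp only: of_nat_eq_iff)
    have "circle_zeros (Dw lam mu w) + real_zeros (Dw lam mu w) \<le> 2 * w + 4"
      using circle_zeros_add_real_zeros_le_degree[OF Dw_nonzero[OF elim(3)]] degree_Dw_le by (rule order.trans)
    with nsol nsol_add_le_circle_zeros[OF elim(3) assms] elim(2) show ?case by linarith
  qed
qed

theorem mainTheorem2:
  fixes lam mu :: real
  assumes "lam \<ge> 0" and "mu \<ge> 0"
  shows
    "(\<forall>w::nat. w \<ge> 1 \<longrightarrow> (\<forall>t::real.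
        poly (Dw lam mu w) (cis t) = 0 \<longleftrightarrow>
          (star_sol lam mu w t \<or> ((lam = 1 \<or> mu = 1) \<and> sin t = 0))))
     \<and> ((lam = 1 \<or> mu = 1) \<longrightarrow> (\<forall>w::nat. w \<ge> 1 \<longrightarrow>
          poly (Dw lam mu w) 1 = 0 \<and> poly (Dw lam mu w) (-1) = 0))
     \<and> ((lam = 1 \<and> mu = 1) \<longrightarrow> (\<forall>w::nat. w \<ge> 1 \<longrightarrow>
          order 1 (Dw lam mu w) = 3 \<and> order (-1) (Dw lam mu w) = 3))
     \<and> (\<exists>W::nat. \<forall>w \<ge> W.
          ((lam < 1 \<and> mu < 1) \<longrightarrow>
             nsol lam mu w = 2*w + 4 \<and> circle_zeros (Dw lam mu w) = 2*w + 4)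
        \<and> (((lam < 1 \<and> mu = 1) \<or> (lam = 1 \<and> mu < 1)) \<longrightarrow>
             nsol lam mu w = 2*w + 2 \<and> circle_zeros (Dw lam mu w) = 2*w + 4)
        \<and> ((lam = 1 \<and> mu = 1) \<longrightarrow>
             nsol lam mu w = 2*w \<and> circle_zeros (Dw lam mu w) = 2*w + 4)
        \<and> (((lam > 1 \<and> mu < 1) \<or> (lam < 1 \<and> mu > 1)) \<longrightarrow>
             nsol lam mu w = 2*w \<and> circle_zeros (Dw lam mu w) = 2*w
             \<and> real_zeros (Dw lam mu w) = 4)
        \<and> (((lam > 1 \<and> mu = 1) \<or> (lam = 1 \<and> mu > 1)) \<longrightarrow>
             nsol lam mu w = 2*w - 2 \<and> circle_zeros (Dw lam mu w) = 2*w
             \<and> real_zeros (Dw lam mu w) = 4)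
        \<and> ((lam > 1 \<and> mu > 1) \<longrightarrow>
             nsol lam mu w = 2*w - 4 \<and> circle_zeros (Dw lam mu w) = 2*w - 4
             \<and> real_zeros (Dw lam mu w) = 8)
        \<and> (\<exists>\<sigma>::nat. \<sigma> \<in> {0, 1, 2} \<and>
             circle_zeros (Dw lam mu w) = (2*w + 4) - 4*\<sigma> \<and>
             real_zeros (Dw lam mu w) = 4*\<sigma>))
     \<and> (\<forall>w::nat. w \<ge> 1 \<longrightarrow> (\<forall>p::real.
          poly (Dw lam mu w) (complex_of_real p) = 0 \<longrightarrow>
            poly (Dw lam mu w) (complex_of_real (-p)) = 0
            \<and> poly (Dw lam mu w) (complex_of_real (1/p)) = 0
            \<and> poly (Dw lam mu w) (complex_of_real (-1/p)) = 0))"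
proof -
  obtain W where counts: "\<And>w. W \<le> w \<Longrightarrow>
      nsol lam mu w + 2 * num_eq_one lam mu + 4 * num_gt_one lam mu = 2 * w + 4
      \<and> circle_zeros (Dw lam mu w) + 4 * num_gt_one lam mu = 2 * w + 4
      \<and> real_zeros (Dw lam mu w) = 4 * num_gt_one lam mu"
    using zero_counts_eventually[OF assms] unfolding eventually_sequentially by blast
  show ?thesis (is "?A \<and> ?B \<and> ?C \<and> (\<exists>W. \<forall>w\<ge>W. ?Q w) \<and> ?E")
  proof (intro conjI)
    show ?A using poly_Dw_cis_eq_0_iff_star_sol[OF assms] by blast
    show ?B using poly_Dw_one poly_Dw_minus_one by blast
    show ?C using Dw_one_one_zeros by blast
    show "\<exists>W. \<forall>w\<ge>W. ?Q w"
    proof (intro exI[of _ W] allI impI)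
      fix w assume "W \<le> w"
      from counts[OF this] show "?Q w"
        by (auto simp: num_gt_one_def num_eq_one_def)
    qed
    show ?E using poly_Dw_real_root_reflections by blast
  qed
qed

end
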